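(* Let $L$ be one of the functions $x\mapsto e^{-|x|^p}$ with $p\ge1$, or $(\hbar^s)^\circ$ with $s>0$, on $\mathbb{R}^d$. Define $L_+(x)=L(x)$ if $\langle x,e_1\rangle\ge0$ and $L_+(x)=0$ if $\langle x,e_1\rangle<0$. Then $L$ is the unique Löwner function of $L_+$ with respect to $L$. Moreover, there is no position $g$ of $L$ with $(L_+)^\circ\le g$.
   Context: $e_1$ is the first standard basis vector of $\mathbb{R}^d$. The height function is $\hbar(x)=\sqrt{1-|x|^2}$ for $|x|\le1$ and $0$ otherwise. The polar function of a non-negative function $f$ is $f^\circ(p)=\inf_{\{x:f(x)>0\}}\frac{e^{-\langle p,x\rangle}}{f(x)}$. Positions of a function $w$ are the functions $\alpha\,w(Ax+a)$ with $A$ a non-singular real $d\times d$ matrix, $\alpha>0$, $a\in\mathbb{R}^d$. A Löwner function of $f$ with respect to $w$ is a position $g$ of $w$ minimizing $\int_{\mathbb{R}^d} g$ subject to $f\le g$ pointwise. *)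

theory Defs
  imports "HOL-Analysis.Analysis"
begin

text \<open>The space R^d is modelled as real^'n, with 'n a finite index type; the
  index type is well-ordered so that the "first" standard basis vector is the axis
  vector at the least index.\<close>

definition e1 :: "real ^ 'n::{finite,wellorder}" where
  "e1 = axis (LEAST i. True) 1"

definition hbar :: "real ^ 'n::finite \<Rightarrow> real" where
  "hbar x = (if norm x \<le> 1 then sqrt (1 - (norm x)\<^sup>2) else 0)"

definition polar :: "(real ^ 'n::finite \<Rightarrow> real) \<Rightarrow> real ^ 'n \<Rightarrow> real" where
  "polar f p = Inf ((\<lambda>x. exp (- (p \<bullet> x)) / f x) ` {x. f x > 0})"

definition is_position :: "(real ^ 'n::finite \<Rightarrow> real) \<Rightarrow> (real ^ 'n \<Rightarrow> real) \<Rightarrow> bool" where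
  "is_position w g \<longleftrightarrow> (\<exists>(A :: real ^ 'n ^ 'n) (\<alpha>::real) (a :: real ^ 'n).
      invertible A \<and> \<alpha> > 0 \<and> g = (\<lambda>x. \<alpha> * w (A *v x + a)))"

definition integral_R :: "(real ^ 'n::finite \<Rightarrow> real) \<Rightarrow> ennreal" where
  "integral_R g = (\<integral>\<^sup>+ x. ennreal (g x) \<partial>lborel)"

definition is_lowner :: "(real ^ 'n::finite \<Rightarrow> real) \<Rightarrow> (real ^ 'n \<Rightarrow> real) \<Rightarrow> (real ^ 'n \<Rightarrow> real) \<Rightarrow> bool" where
  "is_lowner f w g \<longleftrightarrow> is_position w g \<and> (\<forall>x. f x \<le> g x) \<and>
     (\<forall>g'. is_position w g' \<and> (\<forall>x. f x \<le> g' x) \<longrightarrow> integral_R g \<le> integral_R g')"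

end

theory Submission
  imports Defs "HOL-Real_Asymp.Real_Asymp"
begin

text \<open>Both functions are radial, \<open>L(x) = F(|x|)\<close>, with a decreasing profile \<open>F\<close> that decays
  exponentially and satisfies \<open>F(c t) / F(t) \<rightarrow> 0\<close> for every \<open>c > 1\<close>.
  Let \<open>\<alpha> L(A x + a)\<close> be a position lying above \<open>L\<^sub>+\<close>. Evaluating at \<open>0\<close> gives \<open>\<alpha> \<ge> 1\<close>, with
  \<open>a = 0\<close> if \<open>\<alpha> = 1\<close>. If \<open>A\<close> stretched some vector, it would stretch one in the open half-space
  \<open>\<langle>x, e\<^sub>1\<rangle> > 0\<close>, by a factor \<open>c > 1\<close>; far out on that ray the position is at most
  \<open>\<alpha> F(c |x| - |a|)\<close>, which the decay condition pushes below \<open>F(|x|)\<close>. So \<open>A\<close> is a contraction,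
  \<open>|det A| \<le> 1\<close>, and the integral \<open>\<alpha> / |det A| \<cdot> \<integral>L\<close> of the position is at least \<open>\<integral>L\<close>, with
  equality only for \<open>\<alpha> = |det A| = 1\<close> and \<open>a = 0\<close>. A volume-preserving contraction is an
  isometry, so then the position is \<open>L\<close> itself.
  For the polar: along the ray \<open>-t e\<^sub>1\<close> (\<open>t \<ge> 0\<close>) the polar of \<open>L\<^sub>+\<close> stays \<open>\<ge> 1 / F(0)\<close>,
  while every position of \<open>L\<close> tends to \<open>0\<close> there.\<close>

lemma vimage_affine_matrix:
  fixes A B :: "real ^ 'n ^ 'n::finite"
  assumes "A ** B = mat 1" "B ** A = mat 1"
  shows "(\<lambda>x. A *v x + a) -` S = (*v) B ` ((\<lambda>y. y - a) ` S)"
proof (intro set_eqI iffI)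
  fix x assume "x \<in> (\<lambda>x. A *v x + a) -` S"
  moreover have "x = B *v ((A *v x + a) - a)"
    using assms by (simp add: matrix_vector_mul_assoc)
  ultimately show "x \<in> (*v) B ` ((\<lambda>y. y - a) ` S)" by blast
next
  fix x assume "x \<in> (*v) B ` ((\<lambda>y. y - a) ` S)"
  then obtain y where "y \<in> S" "x = B *v (y - a)" by auto
  then show "x \<in> (\<lambda>x. A *v x + a) -` S"
    using assms by (simp add: matrix_vector_mul_assoc)
qed

lemma lborel_affine_matrix:
  fixes A :: "((real, 'n::{finite,wellorder}) vec, 'n) vec"
  assumes "invertible A"
  shows "lborel = density (distr lborel borel (\<lambda>x. A *v x + a)) (\<lambda>_. ennreal \<bar>det A\<bar>)"
proof (rule lborel_eqI)
  fix l u :: "(real, 'n) vec" assume le: "\<And>b. b \<in> Basis \<Longrightarrow> l \<bullet> b \<le> u \<bullet> b"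
  obtain B where AB: "A ** B = mat 1" "B ** A = mat 1"
    using assms unfolding invertible_def by blast
  have det_AB: "\<bar>det A\<bar> * \<bar>det B\<bar> = 1"
    using AB det_mul[of A B] by (simp add: abs_mult[symmetric])
  have [measurable]: "(\<lambda>x. A *v x + a) \<in> borel \<rightarrow>\<^sub>M borel"
    by (intro borel_measurable_continuous_onI continuous_intros)
  have lin: "linear ((*v) B)" by simp
  have shifted: "(\<lambda>y. y - a) ` box l u \<in> lmeasurable"
    by (intro measurable_translation_subtract) auto
  have "measure lebesgue ((\<lambda>x. A *v x + a) -` box l u) = \<bar>det B\<bar> * measure lebesgue (box l u)"
    unfolding vimage_affine_matrix[OF AB]
    using measure_linear_image[OF lin shifted] measure_translation_subtract[of a "box l u"]
    by simp
  moreover have "(\<lambda>x. A *v x + a) -` box l u \<in> lmeasurable"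
    unfolding vimage_affine_matrix[OF AB] by (rule measurable_linear_image[OF lin shifted])
  then have "emeasure lebesgue ((\<lambda>x. A *v x + a) -` box l u)
      = measure lebesgue ((\<lambda>x. A *v x + a) -` box l u)"
    by (rule emeasure_eq_measure2)
  moreover have "(\<lambda>x. A *v x + a) -` box l u \<in> sets borel"
    using measurable_sets[of "\<lambda>x. A *v x + a" borel borel "box l u"] by simp
  ultimately have preimage: "emeasure lborel ((\<lambda>x. A *v x + a) -` box l u)
      = ennreal (\<bar>det B\<bar> * measure lebesgue (box l u))"
    by simp
  have "emeasure (density (distr lborel borel (\<lambda>x. A *v x + a)) (\<lambda>_. ennreal \<bar>det A\<bar>)) (box l u)
      = ennreal \<bar>det A\<bar> * emeasure lborel ((\<lambda>x. A *v x + a) -` box l u)"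
    by (simp add: emeasure_density emeasure_distr nn_integral_cmult_indicator)
  also have "\<dots> = ennreal (measure lebesgue (box l u))"
    unfolding preimage by (simp add: ennreal_mult'[symmetric] mult.assoc[symmetric] det_AB)
  finally show "emeasure (density (distr lborel borel (\<lambda>x. A *v x + a)) (\<lambda>_. ennreal \<bar>det A\<bar>)) (box l u)
      = (\<Prod>b\<in>Basis. (u - l) \<bullet> b)"
    using le by (simp add: measure_lborel_box_eq prod_nonneg)
qed simp

lemma nn_integral_affine_matrix:
  fixes A :: "((real, 'n::{finite,wellorder}) vec, 'n) vec" and f :: "(real, 'n) vec \<Rightarrow> ennreal"
  assumes "invertible A" and [measurable]: "f \<in> borel_measurable borel"
  shows "(\<integral>\<^sup>+x. f x \<partial>lborel) = ennreal \<bar>det A\<bar> * (\<integral>\<^sup>+x. f (A *v x + a) \<partial>lborel)"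
proof -
  have [measurable]: "(\<lambda>x. A *v x + a) \<in> borel \<rightarrow>\<^sub>M borel"
    by (intro borel_measurable_continuous_onI continuous_intros)
  show ?thesis
    by (subst lborel_affine_matrix[OF assms(1), of a])
       (simp add: nn_integral_density nn_integral_distr nn_integral_cmult)
qed

text \<open>A point with \<open>k \<le> |x| \<le> k + 1\<close> lies in the cube \<open>[-(k+1), k+1]\<^sup>d\<close> and the integrand is
  at most \<open>exp (-c k)\<close> there; the resulting bound \<open>\<Sum>\<^sub>k (2k+2)\<^sup>d exp (-c k)\<close> converges.\<close>
lemma nn_integral_exp_neg_norm_finite:
  fixes c :: real
  assumes "c > 0"
  shows "(\<integral>\<^sup>+x. ennreal (exp (- c * norm (x::'a::euclidean_space))) \<partial>lborel) < \<infinity>"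
proof -
  define B where "B k = cbox (- ((real k + 1) *\<^sub>R One)) ((real k + 1) *\<^sub>R One :: 'a)" for k :: nat
  have summable: "summable (\<lambda>k. (2 * (real k + 1)) ^ DIM('a) * exp (- c * real k))"
  proof (rule summable_comparison_test_bigo)
    show "summable (\<lambda>k. norm (1 / real k ^ 2))"
      using inverse_power_summable[of 2] by (simp add: divide_inverse)
    show "(\<lambda>k. (2 * (real k + 1)) ^ DIM('a) * exp (- c * real k)) \<in> O(\<lambda>k. 1 / real k ^ 2)"
      using assms by real_asymp
  qed
  have le: "ennreal (exp (- c * norm x)) \<le> (\<Sum>k. ennreal (exp (- c * real k)) * indicator (B k) x)"
    for x :: 'a
  proof -
    define k where "k = nat \<lfloor>norm x\<rfloor>"
    have "real k = of_int \<lfloor>norm x\<rfloor>"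
      by (simp add: k_def)
    then have k: "real k \<le> norm x" "norm x \<le> real k + 1"
      by linarith+
    have "x \<in> B k"
      using k Basis_le_norm[of _ x] by (force simp: B_def mem_box abs_le_iff)
    then have "ennreal (exp (- c * norm x)) \<le> ennreal (exp (- c * real k)) * indicator (B k) x"
      using k assms by simp
    also have "\<dots> \<le> (\<Sum>k. ennreal (exp (- c * real k)) * indicator (B k) x)"
      using sum_le_suminf[OF summableI, of "{k}"] by simp
    finally show ?thesis .
  qed
  have volume: "emeasure lborel (B k) = ennreal ((2 * (real k + 1)) ^ DIM('a))" for k
  proof -
    have "(\<Prod>b\<in>Basis. ((real k + 1) *\<^sub>R One - - ((real k + 1) *\<^sub>R One :: 'a)) \<bullet> b)
        = (\<Prod>b\<in>(Basis::'a set). 2 * (real k + 1))"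
      by (rule prod.cong) (simp_all add: algebra_simps)
    then show ?thesis
      unfolding B_def emeasure_lborel_cbox_eq by auto
  qed
  have "(\<integral>\<^sup>+x. ennreal (exp (- c * norm (x::'a))) \<partial>lborel)
      \<le> (\<integral>\<^sup>+x. (\<Sum>k. ennreal (exp (- c * real k)) * indicator (B k) x) \<partial>lborel)"
    using le by (intro nn_integral_mono) auto
  also have "\<dots> = (\<Sum>k. (\<integral>\<^sup>+x. ennreal (exp (- c * real k)) * indicator (B k) x \<partial>lborel))"
    by (intro nn_integral_suminf) (auto simp: B_def)
  also have "\<dots> = (\<Sum>k. ennreal ((2 * (real k + 1)) ^ DIM('a) * exp (- c * real k)))"
  proof (rule suminf_cong)
    fix k
    have "B k \<in> sets lborel" by (simp add: B_def)
    then show "(\<integral>\<^sup>+x. ennreal (exp (- c * real k)) * indicator (B k) x \<partial>lborel)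
        = ennreal ((2 * (real k + 1)) ^ DIM('a) * exp (- c * real k))"
      unfolding nn_integral_cmult_indicator[OF \<open>B k \<in> sets lborel\<close>] volume
      by (simp add: ennreal_mult' mult.commute)
  qed
  also have "\<dots> = ennreal (\<Sum>k. (2 * (real k + 1)) ^ DIM('a) * exp (- c * real k))"
    by (intro suminf_ennreal2 summable) auto
  finally show ?thesis
    using order.strict_trans1 by fastforce
qed

lemma measure_image_ball_matrix:
  fixes A :: "((real, 'n::{finite,wellorder}) vec, 'n) vec"
  shows "(*v) A ` ball 0 1 \<in> lmeasurable"
    and "measure lebesgue ((*v) A ` ball 0 1) = \<bar>det A\<bar> * measure lebesgue (ball (0 :: (real, 'n) vec) 1)"
  using measurable_linear_image[of "(*v) A" "ball 0 1"] measure_linear_image[of "(*v) A" "ball 0 1"]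
  by simp_all

lemma contraction_abs_det_le_1:
  fixes A :: "((real, 'n::{finite,wellorder}) vec, 'n) vec"
  assumes "\<And>u. norm (A *v u) \<le> norm u"
  shows "\<bar>det A\<bar> \<le> 1"
proof -
  have "(*v) A ` ball 0 1 \<subseteq> ball 0 1"
    using assms le_less_trans by (fastforce simp: dist_norm)
  then have "\<bar>det A\<bar> * measure lebesgue (ball (0 :: (real, 'n) vec) 1) \<le> measure lebesgue (ball (0 :: (real, 'n) vec) 1)"
    unfolding measure_image_ball_matrix(2)[symmetric]
    by (intro measure_mono_fmeasurable measure_image_ball_matrix(1) fmeasurableD lmeasurable_ball)
  moreover have "0 < measure lebesgue (ball (0 :: (real, 'n) vec) 1)"
    using content_ball_pos[of 1 0] by simp
  ultimately show ?thesis by simp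
qed

text \<open>If \<open>A\<close> shrank some vector, then \<open>A\<^sup>-\<^sup>1\<close> would stretch it, and the open set of points
  of the unit ball that \<open>A\<^sup>-\<^sup>1\<close> maps outside the ball would be missed by \<open>A\<close>(unit ball),
  making the volume of the image too small.\<close>
lemma unimodular_contraction_isometry:
  fixes A :: "((real, 'n::{finite,wellorder}) vec, 'n) vec"
  assumes contraction: "\<And>u. norm (A *v u) \<le> norm u" and det: "\<bar>det A\<bar> = 1"
  shows "norm (A *v u) = norm u"
proof (rule ccontr)
  assume "norm (A *v u) \<noteq> norm u"
  with contraction have shrunk: "norm (A *v u) < norm u"
    using order_le_neq_trans by blast
  obtain B where "B ** A = mat 1"
    using det invertible_det_nz[of A] unfolding invertible_def by auto
  then have BA: "B *v (A *v x) = x" for x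
    by (simp add: matrix_vector_mul_assoc)
  define v where "v = A *v u"
  have "v \<noteq> 0"
    using shrunk BA[of u] by (auto simp: v_def)
  define stretch where "stretch = norm u / norm v"
  have stretch: "1 < stretch"
    using shrunk \<open>v \<noteq> 0\<close> by (simp add: stretch_def v_def)
  define U where "U = {y. 1 < norm (B *v y)} \<inter> ball 0 1"
  have "open U"
    unfolding U_def by (intro open_Int open_ball open_Collect_less continuous_intros)
  define y where "y = ((1 + 1 / stretch) / 2 / norm v) *\<^sub>R v"
  have "norm y = (1 + 1 / stretch) / 2" "norm (B *v y) = (1 + 1 / stretch) / 2 * stretch"
    using \<open>v \<noteq> 0\<close> stretch by (simp_all add: y_def v_def matrix_vector_mult_scaleR BA stretch_def divide_simps)
  moreover have "(1 + 1 / stretch) / 2 < 1" "1 < (1 + 1 / stretch) / 2 * stretch"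
    using stretch by (simp_all add: field_simps)
  ultimately have "y \<in> U"
    by (simp add: U_def)
  then obtain r where "r > 0" "ball y r \<subseteq> U"
    using \<open>open U\<close> open_contains_ball by blast
  have U: "U \<in> lmeasurable"
    by (intro lmeasurable_open \<open>open U\<close>) (auto simp: U_def)
  have "0 < measure lebesgue (ball y r)"
    using content_ball_pos[OF \<open>r > 0\<close>] by simp
  also have "\<dots> \<le> measure lebesgue U"
    using measure_mono_fmeasurable[OF \<open>ball y r \<subseteq> U\<close> _ U] by simp
  finally have "0 < measure lebesgue U" .
  have "(*v) A ` ball 0 1 \<subseteq> ball 0 1 - U"
  proof
    fix y assume "y \<in> (*v) A ` ball 0 1"
    then obtain x where "norm x < 1" "y = A *v x" by auto
    then show "y \<in> ball 0 1 - U"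
      using contraction[of x] BA[of x] by (auto simp: U_def)
  qed
  then have "measure lebesgue ((*v) A ` ball 0 1) \<le> measure lebesgue (ball 0 1 - U)"
    by (intro measure_mono_fmeasurable measure_image_ball_matrix(1) fmeasurableD
        fmeasurable_Diff lmeasurable_ball U)
  also have "\<dots> = measure lebesgue (ball (0 :: (real, 'n) vec) 1) - measure lebesgue U"
    by (rule measure_Diff) (use U fmeasurableD2[OF lmeasurable_ball] in \<open>auto simp: U_def\<close>)
  finally show False
    using \<open>0 < measure lebesgue U\<close> det by (simp add: measure_image_ball_matrix(2))
qed

lemma norm_e1 [simp]: "norm (e1 :: (real, 'n::{finite,wellorder}) vec) = 1"
  and inner_e1_e1 [simp]: "e1 \<bullet> (e1 :: (real, 'n) vec) = 1"
  by (simp_all add: e1_def inner_axis_axis)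

locale rapidly_decreasing_profile =
  fixes F :: "real \<Rightarrow> real"
  assumes pos: "\<And>t. 0 \<le> t \<Longrightarrow> 0 < F t"
    and antimono: "\<And>s t. 0 \<le> s \<Longrightarrow> s \<le> t \<Longrightarrow> F t \<le> F s"
    and less_at_0: "\<And>t. 0 < t \<Longrightarrow> F t < F 0"
    and dilation_ratio_tendsto_0: "\<And>c. 1 < c \<Longrightarrow> ((\<lambda>t. F (c * t) / F t) \<longlongrightarrow> 0) at_top"
    and exp_bound: "\<exists>K k. 0 < k \<and> (\<forall>t\<ge>0. F t \<le> K * exp (- k * t))"
begin

definition radial :: "(real, 'n::{finite,wellorder}) vec \<Rightarrow> real" where
  "radial x = F (norm x)"

definition radial_half :: "(real, 'n::{finite,wellorder}) vec \<Rightarrow> real" where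
  "radial_half x = (if 0 \<le> x \<bullet> e1 then radial x else 0)"

lemma borel_measurable_radial [measurable]:
  "(\<lambda>x::'a::real_normed_vector. F (norm x)) \<in> borel_measurable borel"
proof -
  have "mono (\<lambda>t. - F (max 0 t))"
    using antimono by (auto simp: mono_def max_def)
  then have [measurable]: "(\<lambda>t. - F (max 0 t)) \<in> borel_measurable borel"
    by (rule borel_measurable_mono)
  have "(\<lambda>x::'a. - (- F (max 0 (norm x)))) \<in> borel_measurable borel"
    by measurable
  then show ?thesis by simp
qed

lemma tendsto_0_at_top: "(F \<longlongrightarrow> 0) at_top"
proof -
  obtain K k where "0 < k" and bound: "\<forall>t\<ge>0. F t \<le> K * exp (- k * t)"
    using exp_bound by blast
  have "\<forall>\<^sub>F t in at_top. 0 \<le> F t"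
    using eventually_ge_at_top[of 0] by eventually_elim (simp add: pos less_imp_le)
  moreover have "\<forall>\<^sub>F t in at_top. F t \<le> K * exp (- k * t)"
    using eventually_ge_at_top[of 0] by eventually_elim (use bound in blast)
  moreover have "((\<lambda>t. K * exp (- k * t)) \<longlongrightarrow> 0) at_top"
    using \<open>0 < k\<close> by real_asymp
  ultimately show ?thesis
    by (rule tendsto_sandwich[OF _ _ tendsto_const])
qed

lemma eventually_dominates_shifted_dilation:
  assumes "1 < c" "0 < \<alpha>"
  shows "\<forall>\<^sub>F R in at_top. \<alpha> * F (c * R - b) < F R"
proof -
  define c' where "c' = (1 + c) / 2"
  have "1 < c'" "c' < c"
    using assms(1) by (simp_all add: c'_def)
  have "\<forall>\<^sub>F R in at_top. F (c' * R) / F R < 1 / \<alpha>"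
    using order_tendstoD(2)[OF dilation_ratio_tendsto_0[OF \<open>1 < c'\<close>]] assms(2) by simp
  moreover have "\<forall>\<^sub>F R in at_top. max 0 (b / (c - c')) \<le> R"
    by (rule eventually_ge_at_top)
  ultimately show ?thesis
  proof eventually_elim
    case (elim R)
    then have "0 \<le> R" "b \<le> (c - c') * R"
      using \<open>c' < c\<close> by (auto simp: field_simps)
    then have "F (c * R - b) \<le> F (c' * R)"
      using \<open>1 < c'\<close> by (intro antimono) (auto simp: algebra_simps)
    then have "\<alpha> * F (c * R - b) \<le> \<alpha> * F (c' * R)"
      using assms(2) by simp
    also have "\<dots> < F R"
      using elim assms(2) pos[OF \<open>0 \<le> R\<close>] by (simp add: field_simps)
    finally show ?case .
  qed
qed

lemma nn_integral_radial_eq_ennreal: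
  obtains r where "0 < r" "(\<integral>\<^sup>+x. ennreal (F (norm (x::'a::euclidean_space))) \<partial>lborel) = ennreal r"
proof -
  let ?I = "\<integral>\<^sup>+x. ennreal (F (norm (x::'a))) \<partial>lborel"
  obtain K k where "0 < k" and bound: "\<forall>t\<ge>0. F t \<le> K * exp (- k * t)"
    using exp_bound by blast
  have "0 < K"
    using bound pos[of 0] by force
  have "?I \<le> (\<integral>\<^sup>+x. ennreal K * ennreal (exp (- k * norm (x::'a))) \<partial>lborel)"
    using bound \<open>0 < K\<close> by (intro nn_integral_mono) (simp add: ennreal_mult[symmetric])
  also have "\<dots> = ennreal K * (\<integral>\<^sup>+x. ennreal (exp (- k * norm (x::'a))) \<partial>lborel)"
    by (rule nn_integral_cmult) measurable
  also have "\<dots> < \<infinity>"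
    using nn_integral_exp_neg_norm_finite[OF \<open>0 < k\<close>, where 'a='a] by (simp add: ennreal_mult_less_top)
  finally obtain r where "0 \<le> r" "?I = ennreal r"
    by (cases ?I) auto
  moreover have "?I \<noteq> 0"
  proof
    assume "?I = 0"
    then have "AE x in lborel. ennreal (F (norm (x::'a))) = 0"
      by (simp add: nn_integral_0_iff_AE)
    then have "AE x::'a in lborel. False"
    proof eventually_elim
      case (elim x)
      with pos[of "norm x"] show False by simp
    qed
    then have "UNIV \<in> null_sets (lborel :: 'a measure)"
      using AE_iff_null_sets[of UNIV "lborel :: 'a measure"] by simp
    then show False
      using null_setsD1 emeasure_lborel_UNIV by fastforce
  qed
  ultimately show ?thesis
    using that by fastforce
qed

lemma nn_integral_affine_radial:
  fixes A :: "((real, 'n::{finite,wellorder}) vec, 'n) vec"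
  assumes "invertible A" "0 < \<alpha>"
  shows "(\<integral>\<^sup>+x. ennreal (\<alpha> * F (norm (A *v x + a))) \<partial>lborel)
       = ennreal (\<alpha> / \<bar>det A\<bar>) * (\<integral>\<^sup>+x. ennreal (F (norm (x::(real, 'n) vec))) \<partial>lborel)"
proof -
  have [measurable]: "(\<lambda>x. A *v x + a) \<in> borel \<rightarrow>\<^sub>M borel"
    by (intro borel_measurable_continuous_onI continuous_intros)
  have "det A \<noteq> 0"
    using assms(1) by (simp add: invertible_det_nz)
  let ?J = "\<integral>\<^sup>+x. ennreal (F (norm (A *v x + a))) \<partial>lborel"
  have "(\<integral>\<^sup>+x. ennreal (\<alpha> * F (norm (A *v x + a))) \<partial>lborel) = ennreal \<alpha> * ?J"
    using assms(2) by (simp add: ennreal_mult' nn_integral_cmult)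
  also have "\<dots> = ennreal (\<alpha> / \<bar>det A\<bar>) * (ennreal \<bar>det A\<bar> * ?J)"
    using \<open>det A \<noteq> 0\<close> assms(2) by (simp add: ennreal_mult[symmetric] mult.assoc[symmetric])
  also have "ennreal \<bar>det A\<bar> * ?J = (\<integral>\<^sup>+x. ennreal (F (norm (x::(real, 'n) vec))) \<partial>lborel)"
    by (rule nn_integral_affine_matrix[OF assms(1), symmetric]) measurable
  finally show ?thesis .
qed

lemma dominates_half_imp_contraction:
  fixes A :: "((real, 'n::{finite,wellorder}) vec, 'n) vec"
  assumes "0 < \<alpha>" and dom: "\<And>x. 0 \<le> x \<bullet> e1 \<Longrightarrow> F (norm x) \<le> \<alpha> * F (norm (A *v x + a))"
  shows "norm (A *v u) \<le> norm u"
proof (rule ccontr)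
  assume "\<not> norm (A *v u) \<le> norm u"
  define S where "S = {v. norm v < norm (A *v v)}"
  have "u \<in> S" "- u \<in> S"
    using \<open>\<not> norm (A *v u) \<le> norm u\<close> matrix_vector_mult_diff_distrib[of A 0 u]
    by (simp_all add: S_def)
  then obtain u' where "u' \<in> S" "0 \<le> u' \<bullet> e1"
    by (metis inner_minus_left neg_0_le_iff_le nle_le)
  moreover have "open S"
    unfolding S_def by (intro open_Collect_less continuous_intros)
  ultimately obtain \<epsilon> where "\<epsilon> > 0" "ball u' \<epsilon> \<subseteq> S"
    using open_contains_ball by blast
  define w where "w = u' + (\<epsilon> / 2) *\<^sub>R e1"
  have "w \<in> S"
    using \<open>\<epsilon> > 0\<close> \<open>ball u' \<epsilon> \<subseteq> S\<close> by (auto simp: w_def dist_norm)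
  then have "norm w < norm (A *v w)"
    by (simp add: S_def)
  have "0 < w \<bullet> e1"
    using \<open>0 \<le> u' \<bullet> e1\<close> \<open>\<epsilon> > 0\<close> by (simp add: w_def inner_add_left)
  then have "w \<noteq> 0" by auto
  define c where "c = norm (A *v w) / norm w"
  have "1 < c"
    using \<open>norm w < norm (A *v w)\<close> \<open>w \<noteq> 0\<close> by (simp add: c_def)
  have "\<forall>\<^sub>F R in at_top. norm a \<le> R \<and> 0 < R \<and> \<alpha> * F (c * R - norm a) < F R"
    using eventually_ge_at_top eventually_gt_at_top
      eventually_dominates_shifted_dilation[OF \<open>1 < c\<close> \<open>0 < \<alpha>\<close>]
    by (intro eventually_conj)
  then obtain R where R: "norm a \<le> R" "0 < R" "\<alpha> * F (c * R - norm a) < F R"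
    using eventually_happens by force
  define x where "x = (R / norm w) *\<^sub>R w"
  have "norm x = R" "norm (A *v x) = c * R" "0 \<le> x \<bullet> e1"
    using R \<open>w \<noteq> 0\<close> \<open>0 < w \<bullet> e1\<close> by (simp_all add: x_def matrix_vector_mult_scaleR c_def)
  moreover have "R \<le> c * R"
    using R \<open>1 < c\<close> by simp
  ultimately have "F (norm (A *v x + a)) \<le> F (c * R - norm a)"
    using norm_diff_ineq[of "A *v x" a] R(1) by (intro antimono) auto
  have "F R \<le> \<alpha> * F (norm (A *v x + a))"
    using dom[OF \<open>0 \<le> x \<bullet> e1\<close>] \<open>norm x = R\<close> by simp
  also have "\<dots> \<le> \<alpha> * F (c * R - norm a)"
    using \<open>F (norm (A *v x + a)) \<le> F (c * R - norm a)\<close> \<open>0 < \<alpha>\<close> by simp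
  finally show False
    using R by simp
qed

lemma dominates_half_imp_scale_ge_1:
  fixes A :: "((real, 'n::{finite,wellorder}) vec, 'n) vec"
  assumes dom: "\<And>x. 0 \<le> x \<bullet> e1 \<Longrightarrow> F (norm x) \<le> \<alpha> * F (norm (A *v x + a))"
  shows "1 \<le> \<alpha>" and "\<alpha> = 1 \<Longrightarrow> a = 0"
proof -
  have "F 0 \<le> \<alpha> * F (norm a)" "F (norm a) \<le> F 0" "0 < F (norm a)"
    using dom[of 0] antimono[of 0 "norm a"] pos[of "norm a"] by simp_all
  then show "1 \<le> \<alpha>"
    by (metis mult_le_cancel_right1 order_trans)
  show "a = 0" if "\<alpha> = 1"
    using \<open>F 0 \<le> \<alpha> * F (norm a)\<close> less_at_0[of "norm a"] that by fastforce
qed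

text \<open>At \<open>p = -t e\<^sub>1\<close> the numerator \<open>exp (-\<langle>p, x\<rangle>) = exp (t \<langle>x, e\<^sub>1\<rangle>)\<close> is at least \<open>1\<close> on the
  support of the half function.\<close>
lemma polar_radial_half_ge:
  assumes "0 \<le> t"
  shows "1 / F 0 \<le> polar radial_half (- t *\<^sub>R (e1 :: (real, 'n::{finite,wellorder}) vec))"
  unfolding polar_def
proof (rule cInf_greatest)
  have "(0 :: (real, 'n) vec) \<in> {x. 0 < radial_half x}"
    using pos[of 0] by (simp add: radial_half_def radial_def)
  then show "(\<lambda>x. exp (- ((- t *\<^sub>R e1) \<bullet> x)) / radial_half x) ` {x :: (real, 'n) vec. 0 < radial_half x} \<noteq> {}"
    by blast
next
  fix y assume "y \<in> (\<lambda>x. exp (- ((- t *\<^sub>R e1) \<bullet> x)) / radial_half x) ` {x :: (real, 'n) vec. 0 < radial_half x}"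
  then obtain x :: "(real, 'n) vec"
    where "0 < radial_half x" "y = exp (- ((- t *\<^sub>R e1) \<bullet> x)) / radial_half x"
    by blast
  moreover from this(1) have "0 \<le> x \<bullet> e1"
    by (rule contrapos_pp) (simp add: radial_half_def)
  ultimately have y: "y = exp (t * (x \<bullet> e1)) / F (norm x)"
    by (simp add: radial_half_def radial_def inner_commute)
  have "0 < F (norm x)" "F (norm x) \<le> F 0"
    using pos[of "norm x"] antimono[of 0 "norm x"] by auto
  then have "1 / F 0 \<le> 1 / F (norm x)"
    by (simp add: frac_le)
  also have "\<dots> \<le> exp (t * (x \<bullet> e1)) / F (norm x)"
    using \<open>0 < F (norm x)\<close> \<open>0 \<le> t\<close> \<open>0 \<le> x \<bullet> e1\<close> by (simp add: divide_right_mono)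
  finally show "1 / F 0 \<le> y"
    unfolding y .
qed

lemma affine_radial_below_polar_half:
  fixes A :: "((real, 'n::{finite,wellorder}) vec, 'n) vec"
  assumes "invertible A" "0 < \<alpha>"
  shows "\<exists>p. \<alpha> * F (norm (A *v p + a)) < polar radial_half p"
proof -
  have "0 < 1 / (\<alpha> * F 0)"
    using assms(2) pos[of 0] by simp
  then have "\<forall>\<^sub>F s in at_top. F s < 1 / (\<alpha> * F 0)"
    by (rule order_tendstoD(2)[OF tendsto_0_at_top])
  then obtain s0 where s0: "\<And>s. s0 \<le> s \<Longrightarrow> F s < 1 / (\<alpha> * F 0)"
    by (auto simp: eventually_at_top_linorder)
  obtain B where "B ** A = mat 1"
    using assms(1) unfolding invertible_def by blast
  define v where "v = A *v e1"
  have "B *v v = e1"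
    using \<open>B ** A = mat 1\<close> by (simp add: v_def matrix_vector_mul_assoc)
  then have "v \<noteq> 0"
    by (metis matrix_vector_mult_0_right norm_e1 norm_zero zero_neq_one)
  define t where "t = (max s0 0 + norm a) / norm v"
  have "0 \<le> t"
    by (simp add: t_def)
  have "A *v (- t *\<^sub>R e1) = - t *\<^sub>R v"
    unfolding v_def by (rule matrix_vector_mult_scaleR)
  then have "norm (A *v (- t *\<^sub>R e1)) = max s0 0 + norm a"
    using \<open>v \<noteq> 0\<close> \<open>0 \<le> t\<close> by (simp add: t_def)
  then have "s0 \<le> norm (A *v (- t *\<^sub>R e1) + a)"
    using norm_diff_ineq[of "A *v (- t *\<^sub>R e1)" a] by simp
  then have "\<alpha> * F (norm (A *v (- t *\<^sub>R e1) + a)) < \<alpha> * (1 / (\<alpha> * F 0))"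
    by (intro mult_strict_left_mono s0 assms(2))
  also have "\<dots> = 1 / F 0"
    using assms(2) by simp
  also have "\<dots> \<le> polar radial_half (- t *\<^sub>R e1)"
    by (rule polar_radial_half_ge[OF \<open>0 \<le> t\<close>])
  finally show ?thesis by blast
qed

lemma position_dominating_radial_half:
  fixes g :: "(real, 'n::{finite,wellorder}) vec \<Rightarrow> real"
  assumes "is_position radial g" "\<forall>x. radial_half x \<le> g x"
  obtains A :: "((real, 'n) vec, 'n) vec" and \<alpha> :: real and a :: "(real, 'n) vec"
  where "g = (\<lambda>x. \<alpha> * radial (A *v x + a))" "invertible A"
    "\<And>u. norm (A *v u) \<le> norm u" "1 \<le> \<alpha>" "\<alpha> = 1 \<Longrightarrow> a = 0"
    "integral_R g = ennreal (\<alpha> / \<bar>det A\<bar>) * integral_R (radial :: (real, 'n) vec \<Rightarrow> real)"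
proof -
  obtain A :: "((real, 'n) vec, 'n) vec" and \<alpha> a where A: "invertible A" "0 < \<alpha>" and g: "g = (\<lambda>x. \<alpha> * radial (A *v x + a))"
    using assms(1) unfolding is_position_def by blast
  have dom: "F (norm x) \<le> \<alpha> * F (norm (A *v x + a))" if "0 \<le> x \<bullet> e1" for x
    using assms(2)[rule_format, of x] that by (simp add: g radial_half_def radial_def)
  have "integral_R g = ennreal (\<alpha> / \<bar>det A\<bar>) * integral_R (radial :: (real, 'n) vec \<Rightarrow> real)"
    unfolding integral_R_def g radial_def by (rule nn_integral_affine_radial[OF A])
  with that g A dominates_half_imp_contraction[OF A(2) dom] dominates_half_imp_scale_ge_1[OF dom]
  show thesis by blast
qed

lemma integral_R_radial_le_dominating_position:
  fixes g :: "(real, 'n::{finite,wellorder}) vec \<Rightarrow> real"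
  assumes "is_position radial g" "\<forall>x. radial_half x \<le> g x"
  shows "integral_R (radial :: (real, 'n) vec \<Rightarrow> real) \<le> integral_R g"
proof -
  obtain A :: "((real, 'n) vec, 'n) vec" and \<alpha>
    where "invertible A" "\<And>u. norm (A *v u) \<le> norm u" "1 \<le> \<alpha>"
    and g: "integral_R g = ennreal (\<alpha> / \<bar>det A\<bar>) * integral_R (radial :: (real, 'n) vec \<Rightarrow> real)"
    using position_dominating_radial_half[OF assms] by metis
  then have "0 < \<bar>det A\<bar>" "\<bar>det A\<bar> \<le> 1"
    using contraction_abs_det_le_1 invertible_det_nz by auto
  then have "1 \<le> \<alpha> / \<bar>det A\<bar>"
    using \<open>1 \<le> \<alpha>\<close> by (simp add: le_divide_eq)
  then have "1 \<le> ennreal (\<alpha> / \<bar>det A\<bar>)"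
    by simp
  then have "1 * integral_R (radial :: (real, 'n) vec \<Rightarrow> real)
      \<le> ennreal (\<alpha> / \<bar>det A\<bar>) * integral_R (radial :: (real, 'n) vec \<Rightarrow> real)"
    by (rule mult_right_mono) simp
  then show ?thesis
    by (simp add: g)
qed

lemma dominating_position_eq_radial:
  fixes g :: "(real, 'n::{finite,wellorder}) vec \<Rightarrow> real"
  assumes "is_position radial g" "\<forall>x. radial_half x \<le> g x"
    and "integral_R g \<le> integral_R (radial :: (real, 'n) vec \<Rightarrow> real)"
  shows "g = radial"
proof -
  obtain A :: "((real, 'n) vec, 'n) vec" and \<alpha> a
    where g: "g = (\<lambda>x. \<alpha> * radial (A *v x + a))" and "invertible A"
    and contraction: "\<And>u. norm (A *v u) \<le> norm u" and "1 \<le> \<alpha>" "\<alpha> = 1 \<Longrightarrow> a = 0"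
    and integral: "integral_R g = ennreal (\<alpha> / \<bar>det A\<bar>) * integral_R (radial :: (real, 'n) vec \<Rightarrow> real)"
    using position_dominating_radial_half[OF assms(1,2)] by metis
  obtain r where "0 < r" and r: "integral_R (radial :: (real, 'n) vec \<Rightarrow> real) = ennreal r"
    using nn_integral_radial_eq_ennreal unfolding integral_R_def radial_def by metis
  have "0 < \<bar>det A\<bar>" "\<bar>det A\<bar> \<le> 1"
    using \<open>invertible A\<close> contraction contraction_abs_det_le_1 invertible_det_nz by auto
  have "ennreal (\<alpha> / \<bar>det A\<bar> * r) = ennreal (\<alpha> / \<bar>det A\<bar>) * ennreal r"
    using \<open>1 \<le> \<alpha>\<close> by (intro ennreal_mult') simp
  also have "\<dots> \<le> ennreal r"
    using assms(3) by (simp only: integral r)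
  finally have "\<alpha> / \<bar>det A\<bar> * r \<le> 1 * r"
    using \<open>0 < r\<close> by simp
  then have "\<alpha> \<le> \<bar>det A\<bar>"
    using \<open>0 < r\<close> \<open>0 < \<bar>det A\<bar>\<close> by (simp add: divide_le_eq)
  then have "\<alpha> = 1" "\<bar>det A\<bar> = 1"
    using \<open>1 \<le> \<alpha>\<close> \<open>\<bar>det A\<bar> \<le> 1\<close> by auto
  then show ?thesis
    using unimodular_contraction_isometry[OF contraction] \<open>\<alpha> = 1 \<Longrightarrow> a = 0\<close>
    by (simp add: g fun_eq_iff radial_def)
qed

lemma is_lowner_radial_half: "is_lowner radial_half radial (radial :: (real, 'n::{finite,wellorder}) vec \<Rightarrow> real)"
proof -
  have "is_position radial (radial :: (real, 'n) vec \<Rightarrow> real)"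
    unfolding is_position_def
    by (rule exI[of _ "mat 1"], rule exI[of _ 1], rule exI[of _ 0])
       (auto simp: radial_def invertible_def intro!: exI[of _ "mat 1"])
  moreover have "\<forall>x :: (real, 'n) vec. radial_half x \<le> radial x"
    using pos by (auto simp: radial_half_def radial_def less_imp_le)
  ultimately show ?thesis
    unfolding is_lowner_def using integral_R_radial_le_dominating_position by blast
qed

lemma is_lowner_radial_half_unique:
  "is_lowner radial_half radial g \<Longrightarrow> g = (radial :: (real, 'n::{finite,wellorder}) vec \<Rightarrow> real)"
  using is_lowner_radial_half dominating_position_eq_radial unfolding is_lowner_def by blast

lemma no_position_above_polar_radial_half:
  "\<not> (\<exists>g. is_position radial g \<and> (\<forall>x :: (real, 'n::{finite,wellorder}) vec. polar radial_half x \<le> g x))"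
proof
  assume "\<exists>g. is_position radial g \<and> (\<forall>x :: (real, 'n) vec. polar radial_half x \<le> g x)"
  then obtain A :: "((real, 'n) vec, 'n) vec" and \<alpha> a
    where "invertible A" "0 < \<alpha>" "\<forall>x. polar radial_half x \<le> \<alpha> * F (norm (A *v x + a))"
    unfolding is_position_def radial_def by auto
  then show False
    using affine_radial_below_polar_half not_le by blast
qed

end

lemma rapidly_decreasing_profile_exp_neg_powr:
  fixes p :: real
  assumes "1 \<le> p"
  shows "rapidly_decreasing_profile (\<lambda>t. exp (- (t powr p)))"
proof
  fix s t :: real assume "0 \<le> s" "s \<le> t"
  then show "exp (- (t powr p)) \<le> exp (- (s powr p))"
    using assms by (simp add: powr_mono2)
next
  fix c :: real assume "1 < c"
  define q where "q = c powr p - 1"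
  have "0 < q"
    using \<open>1 < c\<close> assms by (simp add: q_def)
  have ratio: "\<forall>\<^sub>F t in at_top. exp (- ((c * t) powr p)) / exp (- (t powr p)) = exp (- q * t powr p)"
    using eventually_gt_at_top[of 0]
    by eventually_elim (use \<open>1 < c\<close> in \<open>simp add: q_def powr_mult exp_minus field_simps exp_add[symmetric]\<close>)
  have "((\<lambda>t. exp (- q * t powr p)) \<longlongrightarrow> 0) at_top"
    using \<open>0 < q\<close> assms by real_asymp
  then show "((\<lambda>t. exp (- ((c * t) powr p)) / exp (- (t powr p))) \<longlongrightarrow> 0) at_top"
    by (subst tendsto_cong[OF ratio])
next
  have "t - 1 \<le> t powr p" if "0 \<le> t" for t :: real
  proof (cases "1 \<le> t")
    case True
    then have "t powr 1 \<le> t powr p"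
      using assms by (intro powr_mono) auto
    then show ?thesis
      using True by simp
  next
    case False
    then show ?thesis
      using powr_ge_zero[of t p] by linarith
  qed
  then have "\<forall>t\<ge>0. exp (- (t powr p)) \<le> exp 1 * exp (- 1 * t)"
    by (simp add: exp_add[symmetric] algebra_simps)
  then show "\<exists>K k. 0 < k \<and> (\<forall>t\<ge>0. exp (- (t powr p)) \<le> K * exp (- k * t))"
    by (intro exI[of _ "exp 1"] exI[of _ 1]) simp
qed simp_all

text \<open>The polar of \<open>hbar\<^sup>s\<close> at a point \<open>p\<close> with \<open>|p| = t\<close>: by Cauchy-Schwarz the infimum over
  the unit ball may be taken over the segment from \<open>0\<close> towards \<open>p\<close>, and \<open>\<rho>\<close> is the distance
  from the origin.\<close>
definition polar_hbar_profile :: "real \<Rightarrow> real \<Rightarrow> real" where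
  "polar_hbar_profile s t = (INF \<rho>\<in>{0..<1}. exp (- t * \<rho>) / sqrt (1 - \<rho>\<^sup>2) powr s)"

lemma sqrt_one_minus_square_powr_pos:
  fixes \<rho> :: real
  assumes "0 \<le> \<rho>" "\<rho> < 1"
  shows "0 < sqrt (1 - \<rho>\<^sup>2) powr s"
proof -
  have "\<rho>\<^sup>2 < 1"
    using assms by (simp add: abs_square_less_1)
  then show ?thesis
    by simp
qed

lemma polar_hbar_profile_le:
  fixes \<rho> :: real
  assumes "0 \<le> \<rho>" "\<rho> < 1"
  shows "polar_hbar_profile s t \<le> exp (- t * \<rho>) / sqrt (1 - \<rho>\<^sup>2) powr s"
  unfolding polar_hbar_profile_def
  by (rule cInf_lower) (use assms in \<open>auto intro: bdd_belowI[of _ 0]\<close>)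

lemma polar_hbar_profile_greatest:
  assumes "\<And>\<rho>. 0 \<le> \<rho> \<Longrightarrow> \<rho> < 1 \<Longrightarrow> y \<le> exp (- t * \<rho>) / sqrt (1 - \<rho>\<^sup>2) powr s"
  shows "y \<le> polar_hbar_profile s t"
  unfolding polar_hbar_profile_def by (rule cInf_greatest) (use assms in auto)

lemma exp_neg_le_polar_hbar_profile:
  assumes "0 \<le> t" "0 \<le> s"
  shows "exp (- t) \<le> polar_hbar_profile s t"
proof (rule polar_hbar_profile_greatest)
  fix \<rho> :: real assume "0 \<le> \<rho>" "\<rho> < 1"
  have "\<rho>\<^sup>2 < 1"
    using \<open>0 \<le> \<rho>\<close> \<open>\<rho> < 1\<close> by (simp add: abs_square_less_1)
  then have "sqrt (1 - \<rho>\<^sup>2) powr s \<le> 1"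
    using \<open>0 \<le> \<rho>\<close> assms(2) by (intro powr_le1) auto
  then have "exp (- t * \<rho>) \<le> exp (- t * \<rho>) / sqrt (1 - \<rho>\<^sup>2) powr s"
    using sqrt_one_minus_square_powr_pos[OF \<open>0 \<le> \<rho>\<close> \<open>\<rho> < 1\<close>] by (simp add: le_divide_eq)
  moreover have "exp (- t) \<le> exp (- t * \<rho>)"
    using assms(1) \<open>\<rho> < 1\<close> by (simp add: mult_left_le)
  ultimately show "exp (- t) \<le> exp (- t * \<rho>) / sqrt (1 - \<rho>\<^sup>2) powr s"
    by linarith
qed

text \<open>Near \<open>\<rho> = 0\<close> the numerator \<open>exp (-t \<rho>)\<close> decreases to first order, while the denominator
  \<open>(1 - \<rho>\<^sup>2)\<^sup>s\<^sup>/\<^sup>2 \<ge> exp (-s \<rho>\<^sup>2)\<close> decreases only to second order.\<close>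
lemma polar_hbar_profile_less_1:
  assumes "0 < s" "0 < t"
  shows "polar_hbar_profile s t < 1"
proof -
  define \<rho> where "\<rho> = min (1 / 2) (t / (2 * s))"
  have "0 < \<rho>" "\<rho> \<le> 1 / 2" "s * \<rho> < t"
    using assms by (auto simp: \<rho>_def min_def field_simps)
  then have "\<rho>\<^sup>2 \<le> (1 / 2)\<^sup>2"
    by (intro power_mono) auto
  then have "\<rho>\<^sup>2 \<le> 1 / 4"
    by (simp add: power2_eq_square)
  have "- \<rho>\<^sup>2 - 2 * (\<rho>\<^sup>2)\<^sup>2 \<le> ln (1 - \<rho>\<^sup>2)"
    by (rule ln_one_minus_pos_lower_bound) (use \<open>\<rho>\<^sup>2 \<le> 1 / 4\<close> in auto)
  moreover have "\<rho>\<^sup>2 * (2 * \<rho>\<^sup>2) \<le> \<rho>\<^sup>2 * 1"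
    using \<open>\<rho>\<^sup>2 \<le> 1 / 4\<close> by (intro mult_left_mono) auto
  ultimately have "- 2 * \<rho>\<^sup>2 \<le> ln (1 - \<rho>\<^sup>2)"
    by (simp add: power2_eq_square algebra_simps)
  have "- t * \<rho> < s / 2 * (- 2 * \<rho>\<^sup>2)"
    using \<open>s * \<rho> < t\<close> \<open>0 < \<rho>\<close> by (simp add: power2_eq_square)
  also have "\<dots> \<le> s / 2 * ln (1 - \<rho>\<^sup>2)"
    using \<open>- 2 * \<rho>\<^sup>2 \<le> ln (1 - \<rho>\<^sup>2)\<close> assms(1) by (intro mult_left_mono) auto
  finally have "exp (- t * \<rho>) < exp (s / 2 * ln (1 - \<rho>\<^sup>2))"
    by simp
  also have "\<dots> = sqrt (1 - \<rho>\<^sup>2) powr s"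
    using \<open>\<rho>\<^sup>2 \<le> 1 / 4\<close> by (simp add: powr_def ln_sqrt)
  finally have "exp (- t * \<rho>) / sqrt (1 - \<rho>\<^sup>2) powr s < 1"
    using sqrt_one_minus_square_powr_pos[of \<rho> s] \<open>0 < \<rho>\<close> \<open>\<rho> \<le> 1 / 2\<close> by simp
  moreover have "polar_hbar_profile s t \<le> exp (- t * \<rho>) / sqrt (1 - \<rho>\<^sup>2) powr s"
    using \<open>0 < \<rho>\<close> \<open>\<rho> \<le> 1 / 2\<close> by (intro polar_hbar_profile_le) auto
  ultimately show ?thesis
    by linarith
qed

lemma polar_hbar_profile_pos:
  assumes "0 \<le> t" "0 \<le> s"
  shows "0 < polar_hbar_profile s t"
  using exp_gt_zero[of "- t"] exp_neg_le_polar_hbar_profile[OF assms] by linarith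

lemma rapidly_decreasing_profile_polar_hbar:
  assumes "0 < s"
  shows "rapidly_decreasing_profile (polar_hbar_profile s)"
proof
  fix t :: real assume "0 \<le> t"
  then show "0 < polar_hbar_profile s t"
    using assms by (simp add: polar_hbar_profile_pos)
next
  fix t t' :: real assume "0 \<le> t" "t \<le> t'"
  show "polar_hbar_profile s t' \<le> polar_hbar_profile s t"
  proof (rule polar_hbar_profile_greatest)
    fix \<rho> :: real assume "0 \<le> \<rho>" "\<rho> < 1"
    have "polar_hbar_profile s t' \<le> exp (- t' * \<rho>) / sqrt (1 - \<rho>\<^sup>2) powr s"
      by (rule polar_hbar_profile_le[OF \<open>0 \<le> \<rho>\<close> \<open>\<rho> < 1\<close>])
    also have "\<dots> \<le> exp (- t * \<rho>) / sqrt (1 - \<rho>\<^sup>2) powr s"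
      using \<open>t \<le> t'\<close> \<open>0 \<le> \<rho>\<close> sqrt_one_minus_square_powr_pos[OF \<open>0 \<le> \<rho>\<close> \<open>\<rho> < 1\<close>]
      by (intro divide_right_mono) (simp_all add: mult_right_mono)
    finally show "polar_hbar_profile s t' \<le> exp (- t * \<rho>) / sqrt (1 - \<rho>\<^sup>2) powr s" .
  qed
next
  fix t :: real assume "0 < t"
  have "1 \<le> polar_hbar_profile s 0"
    using exp_neg_le_polar_hbar_profile[of 0 s] assms by simp
  then show "polar_hbar_profile s t < polar_hbar_profile s 0"
    using polar_hbar_profile_less_1[OF assms \<open>0 < t\<close>] by linarith
next
  fix c :: real assume "1 < c"
  define \<rho> where "\<rho> = (1 + 1 / c) / 2"
  have "0 \<le> \<rho>" "\<rho> < 1" "1 < c * \<rho>"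
    using \<open>1 < c\<close> by (auto simp: \<rho>_def field_simps)
  define K where "K = 1 / sqrt (1 - \<rho>\<^sup>2) powr s"
  have "0 < K"
    using sqrt_one_minus_square_powr_pos[OF \<open>0 \<le> \<rho>\<close> \<open>\<rho> < 1\<close>] by (simp add: K_def)
  have upper: "polar_hbar_profile s (c * t) / polar_hbar_profile s t \<le> K * exp (- (c * \<rho> - 1) * t)"
    if "0 \<le> t" for t
  proof -
    have "polar_hbar_profile s (c * t) \<le> K * exp (- (c * t) * \<rho>)"
      using polar_hbar_profile_le[OF \<open>0 \<le> \<rho>\<close> \<open>\<rho> < 1\<close>] by (simp add: K_def)
    moreover have "exp (- t) \<le> polar_hbar_profile s t"
      using exp_neg_le_polar_hbar_profile that assms by simp
    ultimately have "polar_hbar_profile s (c * t) / polar_hbar_profile s t \<le> K * exp (- (c * t) * \<rho>) / exp (- t)"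
      using \<open>0 < K\<close> by (intro frac_le) simp_all
    also have "\<dots> = K * exp (- (c * \<rho> - 1) * t)"
      by (simp add: exp_minus exp_add[symmetric] field_simps)
    finally show ?thesis .
  qed
  have lower: "0 \<le> polar_hbar_profile s (c * t) / polar_hbar_profile s t" if "0 \<le> t" for t
    using that \<open>1 < c\<close> assms by (simp add: less_imp_le polar_hbar_profile_pos)
  have "\<forall>\<^sub>F t in at_top. 0 \<le> polar_hbar_profile s (c * t) / polar_hbar_profile s t"
    using eventually_ge_at_top[of 0] by eventually_elim (rule lower)
  moreover have "\<forall>\<^sub>F t in at_top.
      polar_hbar_profile s (c * t) / polar_hbar_profile s t \<le> K * exp (- (c * \<rho> - 1) * t)"
    using eventually_ge_at_top[of 0] by eventually_elim (rule upper)
  moreover have "((\<lambda>t. K * exp (- (c * \<rho> - 1) * t)) \<longlongrightarrow> 0) at_top"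
    using \<open>1 < c * \<rho>\<close> by real_asymp
  ultimately show "((\<lambda>t. polar_hbar_profile s (c * t) / polar_hbar_profile s t) \<longlongrightarrow> 0) at_top"
    by (rule tendsto_sandwich[OF _ _ tendsto_const])
next
  have "\<forall>t\<ge>0. polar_hbar_profile s t \<le> (1 / sqrt (1 - (1 / 2)\<^sup>2) powr s) * exp (- (1 / 2) * t)"
    using polar_hbar_profile_le[of "1 / 2" s] by (simp add: mult.commute)
  then show "\<exists>K k. 0 < k \<and> (\<forall>t\<ge>0. polar_hbar_profile s t \<le> K * exp (- k * t))"
    by (intro exI[of _ "1 / sqrt (1 - (1 / 2)\<^sup>2) powr s"] exI[of _ "1 / 2"]) simp
qed

lemma hbar_nonneg: "0 \<le> hbar x"
  by (auto simp: hbar_def intro!: power_le_one)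

lemma hbar_pos_iff: "0 < hbar x \<longleftrightarrow> norm x < 1"
proof
  assume "0 < hbar x"
  then have "(norm x)\<^sup>2 < 1"
    by (auto simp: hbar_def split: if_splits)
  then show "norm x < 1"
    using abs_square_less_1[of "norm x"] by simp
next
  assume "norm x < 1"
  then have "(norm x)\<^sup>2 < 1"
    by (simp add: abs_square_less_1)
  then show "0 < hbar x"
    using \<open>norm x < 1\<close> by (simp add: hbar_def)
qed

lemma polar_hbar_powr:
  assumes "0 < s"
  shows "polar (\<lambda>x::(real, 'n::{finite,wellorder}) vec. hbar x powr s) p = polar_hbar_profile s (norm p)"
proof -
  let ?E = "\<lambda>x::(real, 'n) vec. exp (- (p \<bullet> x)) / hbar x powr s"
  have "0 < hbar x powr s \<longleftrightarrow> x \<in> ball 0 1" for x :: "(real, 'n) vec"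
    using hbar_nonneg[of x] hbar_pos_iff[of x] by (auto simp: less_le)
  then have support: "{x :: (real, 'n) vec. 0 < hbar x powr s} = ball 0 1"
    by blast
  have hbar: "hbar x = sqrt (1 - (norm x)\<^sup>2)" if "norm x < 1" for x :: "(real, 'n) vec"
    using that by (simp add: hbar_def)
  have "Inf (?E ` ball 0 1) = polar_hbar_profile s (norm p)"
  proof (rule antisym)
    show "Inf (?E ` ball 0 1) \<le> polar_hbar_profile s (norm p)"
    proof (rule polar_hbar_profile_greatest)
      fix \<rho> :: real assume "0 \<le> \<rho>" "\<rho> < 1"
      define x where "x = (if p = 0 then \<rho> *\<^sub>R e1 else (\<rho> / norm p) *\<^sub>R p)"
      have "norm x = \<rho>" "p \<bullet> x = norm p * \<rho>"
        using \<open>0 \<le> \<rho>\<close> by (auto simp: x_def power2_norm_eq_inner[symmetric] power2_eq_square)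
      then have "?E x = exp (- norm p * \<rho>) / sqrt (1 - \<rho>\<^sup>2) powr s"
        using hbar[of x] \<open>\<rho> < 1\<close> by simp
      moreover have "Inf (?E ` ball 0 1) \<le> ?E x"
        using \<open>norm x = \<rho>\<close> \<open>\<rho> < 1\<close> by (intro cInf_lower bdd_belowI[of _ 0]) auto
      ultimately show "Inf (?E ` ball 0 1) \<le> exp (- norm p * \<rho>) / sqrt (1 - \<rho>\<^sup>2) powr s"
        by simp
    qed
  next
    show "polar_hbar_profile s (norm p) \<le> Inf (?E ` ball 0 1)"
    proof (rule cInf_greatest)
      fix y assume "y \<in> ?E ` ball 0 1"
      then obtain x where x: "norm x < 1" "y = ?E x"
        by auto
      have "polar_hbar_profile s (norm p) \<le> exp (- norm p * norm x) / sqrt (1 - (norm x)\<^sup>2) powr s"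
        using x(1) by (intro polar_hbar_profile_le) auto
      also have "\<dots> \<le> ?E x"
        unfolding hbar[OF x(1)]
        using sqrt_one_minus_square_powr_pos[of "norm x" s] x(1) norm_cauchy_schwarz[of p x]
        by (intro divide_right_mono) auto
      finally show "polar_hbar_profile s (norm p) \<le> y"
        using x(2) by simp
    qed simp
  qed
  then show ?thesis
    unfolding polar_def support .
qed

theorem lemma6p1:
  fixes L :: "real ^ 'n::{finite,wellorder} \<Rightarrow> real"
  assumes "(\<exists>p::real. p \<ge> 1 \<and> L = (\<lambda>x. exp (- (norm x powr p))))
         \<or> (\<exists>s::real. s > 0 \<and> L = polar (\<lambda>x. hbar x powr s))"
  defines "Lplus \<equiv> (\<lambda>x. if x \<bullet> e1 \<ge> 0 then L x else 0)"
  shows "is_lowner Lplus L L \<and> (\<forall>g. is_lowner Lplus L g \<longrightarrow> g = L)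
       \<and> \<not> (\<exists>g. is_position L g \<and> (\<forall>x. polar Lplus x \<le> g x))"
proof -
  obtain F where profile: "rapidly_decreasing_profile F" and L: "L = (\<lambda>x. F (norm x))"
    using assms(1)
  proof (elim disjE exE conjE)
    fix p :: real assume "1 \<le> p" "L = (\<lambda>x. exp (- (norm x powr p)))"
    then show thesis
      using that rapidly_decreasing_profile_exp_neg_powr by blast
  next
    fix s :: real assume "0 < s" "L = polar (\<lambda>x. hbar x powr s)"
    then have "L = (\<lambda>x. polar_hbar_profile s (norm x))"
      by (simp add: polar_hbar_powr fun_eq_iff)
    then show thesis
      using that rapidly_decreasing_profile_polar_hbar \<open>0 < s\<close> by blast
  qed
  interpret rapidly_decreasing_profile F
    by (fact profile)
  have "L = radial" "Lplus = radial_half"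
    by (simp_all add: L Lplus_def radial_def radial_half_def fun_eq_iff)
  then show ?thesis
    using is_lowner_radial_half is_lowner_radial_half_unique no_position_above_polar_radial_half
    by blast
qed

end
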